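(* Let $G$ be a finite group of order $v$ and suppose $\gcd(sk,v-1)=1$. Then (i) if $S'$ is a $(v,s,k,\lambda_1,\mu_1)$-DPDF in $G$, then $\mu_1=0$ or $\mu_1=sk$; (ii) if $S'$ is a $(v,s,k,\lambda_2,\mu_2)$-EPDF in $G$, then $\mu_2=0$ or $\mu_2=sk$.
   Context: Groups are written multiplicatively with identity $e$; $G^*=G\setminus\{e\}$. For $D\subseteq G$, $\Delta(D)$ is the multiset $\{xy^{-1}: x,y\in D, x\ne y\}$; for $D_1,D_2\subseteq G$, $\Delta(D_1,D_2)$ is the multiset $\{xy^{-1}:x\in D_1,y\in D_2\}$. For a family $A=\{A_1,\dots,A_s\}$ of pairwise disjoint subsets, ${\rm Int}(A)=\bigcup_i\Delta(A_i)$ and ${\rm Ext}(A)=\bigcup_{i\ne j}\Delta(A_i,A_j)$ (multiset unions). For $|G|=v$, a $(v,s,k,\lambda,\mu)$-DPDF is a family of $s$ pairwise disjoint $k$-subsets of $G^*$ with union $S$ such that ${\rm Int}(A)$ contains each element of $S$ exactly $\lambda$ times and each element of $G\setminus(S\cup\{e\})$ exactly $\mu$ times; a $(v,s,k,\lambda,\mu)$-EPDF is defined the same way using ${\rm Ext}(A)$. *)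

theory Defs
  imports "HOL-Algebra.Coset"
begin

definition pdf_family :: "('a, 'b) monoid_scheme \<Rightarrow> nat \<Rightarrow> nat \<Rightarrow> (nat \<Rightarrow> 'a set) \<Rightarrow> bool" where
  "pdf_family G s k A \<longleftrightarrow>
     (\<forall>i<s. A i \<subseteq> carrier G - {\<one>\<^bsub>G\<^esub>} \<and> finite (A i) \<and> card (A i) = k) \<and>
     (\<forall>i<s. \<forall>j<s. i \<noteq> j \<longrightarrow> A i \<inter> A j = {})"

definition pdf_union :: "nat \<Rightarrow> (nat \<Rightarrow> 'a set) \<Rightarrow> 'a set" where
  "pdf_union s A = (\<Union>i<s. A i)"

text \<open>Multiplicity of g in Int(A) = union of Delta(A_i).\<close>
definition int_mult :: "('a, 'b) monoid_scheme \<Rightarrow> nat \<Rightarrow> (nat \<Rightarrow> 'a set) \<Rightarrow> 'a \<Rightarrow> nat" where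
  "int_mult G s A g = card {(i, x, y). i < s \<and> x \<in> A i \<and> y \<in> A i \<and> x \<noteq> y \<and>
                                     x \<otimes>\<^bsub>G\<^esub> inv\<^bsub>G\<^esub> y = g}"

text \<open>Multiplicity of g in Ext(A) = union over i /= j of Delta(A_i, A_j).\<close>
definition ext_mult :: "('a, 'b) monoid_scheme \<Rightarrow> nat \<Rightarrow> (nat \<Rightarrow> 'a set) \<Rightarrow> 'a \<Rightarrow> nat" where
  "ext_mult G s A g = card {(i, j, x, y). i < s \<and> j < s \<and> i \<noteq> j \<and> x \<in> A i \<and> y \<in> A j \<and>
                                        x \<otimes>\<^bsub>G\<^esub> inv\<^bsub>G\<^esub> y = g}"

definition DPDF :: "('a, 'b) monoid_scheme \<Rightarrow> nat \<Rightarrow> nat \<Rightarrow> nat \<Rightarrow> nat \<Rightarrow> nat \<Rightarrow> (nat \<Rightarrow> 'a set) \<Rightarrow> bool" where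
  "DPDF G v s k lam mu A \<longleftrightarrow> order G = v \<and> pdf_family G s k A \<and>
     (\<forall>g \<in> pdf_union s A. int_mult G s A g = lam) \<and>
     (\<forall>g \<in> carrier G - (pdf_union s A \<union> {\<one>\<^bsub>G\<^esub>}). int_mult G s A g = mu)"

definition EPDF :: "('a, 'b) monoid_scheme \<Rightarrow> nat \<Rightarrow> nat \<Rightarrow> nat \<Rightarrow> nat \<Rightarrow> nat \<Rightarrow> (nat \<Rightarrow> 'a set) \<Rightarrow> bool" where
  "EPDF G v s k lam mu A \<longleftrightarrow> order G = v \<and> pdf_family G s k A \<and>
     (\<forall>g \<in> pdf_union s A. ext_mult G s A g = lam) \<and>
     (\<forall>g \<in> carrier G - (pdf_union s A \<union> {\<one>\<^bsub>G\<^esub>}). ext_mult G s A g = mu)"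

end

theory Submission
  imports Defs
begin

text \<open>Let \<open>S\<close> be the union of the blocks and \<open>R = G\<^sup>* - S\<close>. Both \<open>Int(A)\<close> and \<open>Ext(A)\<close>
  are the quotients \<open>x y\<^sup>-\<^sup>1\<close> over a set \<open>P\<close> of pairs of distinct elements of \<open>S\<close>, and
  \<open>|P|\<close> (\<open>sk(k - 1)\<close> resp. \<open>sk(sk - k)\<close>) is a multiple of \<open>|S| = sk\<close>.
  Counting \<open>P\<close> by quotients gives \<open>|P| = \<lambda>|S| + \<mu>|R|\<close>, and \<open>|S| + |R| = v - 1\<close> is coprime
  to \<open>|S|\<close>, so \<open>|S|\<close> divides \<open>\<mu>\<close>. But a pair with quotient \<open>g\<close> is determined by its second
  entry \<open>y \<in> S\<close>, so \<open>\<mu> \<le> |S|\<close>.\<close>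

lemma card_eq_sum_card_fibres:
  assumes "finite A" and "finite B" and "f ` A \<subseteq> B"
  shows "card A = (\<Sum>b\<in>B. card {a \<in> A. f a = b})"
  using sum_fun_comp[OF assms, of "\<lambda>_. 1 :: nat"] by simp

lemma zero_or_eq_if_dvd_le:
  fixes a m :: nat
  assumes "a dvd m" and "m \<le> a"
  shows "m = 0 \<or> m = a"
  using assms nat_dvd_not_less[of m a] by fastforce

lemma (in group) card_quotient_fibre_le:
  assumes "P \<subseteq> carrier G \<times> S" and "S \<subseteq> carrier G" and "finite S" and "g \<in> carrier G"
  shows "card {(x, y) \<in> P. x \<otimes> inv y = g} \<le> card S"
proof -
  have "{(x, y) \<in> P. x \<otimes> inv y = g} \<subseteq> (\<lambda>y. (g \<otimes> y, y)) ` S"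
  proof
    fix p assume "p \<in> {(x, y) \<in> P. x \<otimes> inv y = g}"
    then obtain x y where p: "p = (x, y)" and "(x, y) \<in> P" and "x \<otimes> inv y = g" by blast
    with assms have "x = g \<otimes> y" and "y \<in> S"
      using inv_solve_right[of g x y] by auto
    then show "p \<in> (\<lambda>y. (g \<otimes> y, y)) ` S" unfolding p by blast
  qed
  then have "card {(x, y) \<in> P. x \<otimes> inv y = g} \<le> card ((\<lambda>y. (g \<otimes> y, y)) ` S)"
    using \<open>finite S\<close> by (intro card_mono) auto
  also have "\<dots> \<le> card S"
    by (rule card_image_le) (fact \<open>finite S\<close>)
  finally show ?thesis .
qed

lemma (in group) quotient_multiplicity_zero_or_card:
  assumes fin: "finite (carrier G)"
    and S: "S \<subseteq> carrier G - {\<one>}"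
    and P: "P \<subseteq> carrier G \<times> S - Id"
    and dvd_P: "card S dvd card P"
    and lam: "\<forall>g\<in>S. card {(x, y) \<in> P. x \<otimes> inv y = g} = lam"
    and mu: "\<forall>g\<in>carrier G - (S \<union> {\<one>}). card {(x, y) \<in> P. x \<otimes> inv y = g} = mu"
    and R_ne: "carrier G - (S \<union> {\<one>}) \<noteq> {}"
    and coprime: "coprime (card S) (order G - 1)"
  shows "mu = 0 \<or> mu = card S"
proof -
  define R where "R = carrier G - (S \<union> {\<one>})"
  define q where "q = (\<lambda>(x, y). x \<otimes> inv y)"
  have fibre: "{p \<in> P. q p = g} = {(x, y) \<in> P. x \<otimes> inv y = g}" for g
    unfolding q_def by auto
  have fin_S: "finite S" and fin_R: "finite R" and fin_P: "finite P"
    using S P fin finite_subset[of S "carrier G"] finite_subset[of P "carrier G \<times> carrier G"]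
    unfolding R_def by auto
  have disj: "S \<inter> R = {}" and S_R: "S \<union> R = carrier G - {\<one>}"
    using S unfolding R_def by auto
  obtain g0 where g0: "g0 \<in> R" using R_ne unfolding R_def by blast
  have mu_le: "mu \<le> card S"
    using card_quotient_fibre_le[of P S g0] P S fin_S g0 mu unfolding R_def by auto
  have "q p \<in> S \<union> R" if "p \<in> P" for p
  proof -
    obtain x y where p: "p = (x, y)" by fastforce
    with that P S have "x \<in> carrier G" "y \<in> carrier G" "x \<noteq> y" by auto
    then show "q p \<in> S \<union> R"
      unfolding p q_def R_def using inv_solve_right[of \<one> x y] by auto
  qed
  then have "card P = (\<Sum>g\<in>S \<union> R. card {p \<in> P. q p = g})"
    using fin_P fin_S fin_R by (intro card_eq_sum_card_fibres) auto
  also have "\<dots> = (\<Sum>g\<in>S. card {p \<in> P. q p = g}) + (\<Sum>g\<in>R. card {p \<in> P. q p = g})"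
    by (rule sum.union_disjoint[OF fin_S fin_R disj])
  also have "\<dots> = lam * card S + mu * card R"
    using lam mu unfolding fibre R_def by simp
  finally have card_P: "card P = lam * card S + mu * card R" .
  have "card S + card R = card (carrier G - {\<one>})"
    using card_Un_disjoint[OF fin_S fin_R disj] S_R by simp
  also have "\<dots> = order G - 1"
    using fin by (simp add: order_def card_Diff_singleton)
  finally have "coprime (card S) (card R)"
    using coprime by (metis coprime_iff_gcd_eq_1 gcd_add2)
  moreover have "card S dvd mu * card R"
    using dvd_P card_P by (simp add: dvd_add_right_iff)
  ultimately have "card S dvd mu"
    by (simp add: coprime_dvd_mult_left_iff)
  then show ?thesis
    using mu_le by (rule zero_or_eq_if_dvd_le)
qed

text \<open>With \<open>S = pdf_union s A\<close>, \<open>Int(A)\<close> is the multiset of quotients \<open>x y\<^sup>-\<^sup>1\<close> over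
  \<open>block_pairs s A - Id\<close> and \<open>Ext(A)\<close> the one over \<open>S \<times> S - block_pairs s A\<close>.\<close>

definition block_pairs :: "nat \<Rightarrow> (nat \<Rightarrow> 'a set) \<Rightarrow> ('a \<times> 'a) set" where
  "block_pairs s A = (\<Union>i<s. A i \<times> A i)"

lemma pdf_family_index_unique:
  assumes "pdf_family G s k A" and "i < s" and "j < s" and "x \<in> A i" and "x \<in> A j"
  shows "i = j"
  using assms unfolding pdf_family_def by blast

lemma pdf_family_finite:
  assumes "pdf_family G s k A" and "i < s"
  shows "finite (A i)" and "card (A i) = k"
  using assms unfolding pdf_family_def by auto

lemma pdf_union_subset:
  assumes "pdf_family G s k A"
  shows "pdf_union s A \<subseteq> carrier G - {\<one>\<^bsub>G\<^esub>}"
  using assms unfolding pdf_family_def pdf_union_def by auto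

lemma finite_pdf_union:
  assumes "pdf_family G s k A"
  shows "finite (pdf_union s A)"
  unfolding pdf_union_def using pdf_family_finite[OF assms] by auto

lemma card_pdf_union:
  assumes "pdf_family G s k A"
  shows "card (pdf_union s A) = s * k"
proof -
  have "card (\<Union>i<s. A i) = (\<Sum>i<s. card (A i))"
    using pdf_family_finite[OF assms] pdf_family_index_unique[OF assms]
    by (intro card_UN_disjoint) auto
  also have "\<dots> = s * k"
    using pdf_family_finite[OF assms] by simp
  finally show ?thesis unfolding pdf_union_def .
qed

lemma block_pairs_subset:
  "block_pairs s A \<subseteq> pdf_union s A \<times> pdf_union s A"
  unfolding block_pairs_def pdf_union_def by blast

lemma finite_block_pairs:
  assumes "pdf_family G s k A"
  shows "finite (block_pairs s A)"
  by (rule finite_subset[OF block_pairs_subset]) (simp add: finite_pdf_union[OF assms])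

lemma card_block_pairs:
  assumes "pdf_family G s k A"
  shows "card (block_pairs s A) = s * (k * k)"
proof -
  have "card (\<Union>i<s. A i \<times> A i) = (\<Sum>i<s. card (A i \<times> A i))"
    using pdf_family_finite[OF assms] pdf_family_index_unique[OF assms]
    by (intro card_UN_disjoint) auto
  also have "\<dots> = s * (k * k)"
    using pdf_family_finite[OF assms] by (simp add: card_cartesian_product)
  finally show ?thesis unfolding block_pairs_def .
qed

lemma card_block_pairs_diff_Id:
  assumes "pdf_family G s k A"
  shows "card (block_pairs s A - Id) = s * k * (k - 1)"
proof -
  have "block_pairs s A \<inter> Id = (\<lambda>x. (x, x)) ` pdf_union s A"
    unfolding block_pairs_def pdf_union_def by auto
  then have "card (block_pairs s A \<inter> Id) = s * k"
    using card_pdf_union[OF assms] by (simp add: card_image inj_on_def)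
  then show ?thesis
    using card_block_pairs[OF assms] finite_block_pairs[OF assms]
    by (simp add: card_Diff_subset_Int diff_mult_distrib2)
qed

lemma card_pdf_union_sq_diff_block_pairs:
  assumes "pdf_family G s k A"
  shows "card (pdf_union s A \<times> pdf_union s A - block_pairs s A) = s * k * (s * k - k)"
proof -
  have "card (pdf_union s A \<times> pdf_union s A - block_pairs s A)
      = card (pdf_union s A \<times> pdf_union s A) - card (block_pairs s A)"
    by (rule card_Diff_subset[OF finite_block_pairs[OF assms] block_pairs_subset])
  then show ?thesis
    using card_block_pairs[OF assms] card_pdf_union[OF assms]
    by (simp add: card_cartesian_product diff_mult_distrib2 mult.assoc)
qed

lemma int_mult_eq_card_fibre:
  assumes "pdf_family G s k A"
  shows "int_mult G s A g = card {(x, y) \<in> block_pairs s A - Id. x \<otimes>\<^bsub>G\<^esub> inv\<^bsub>G\<^esub> y = g}"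
    (is "_ = card ?P")
proof -
  let ?T = "{(i, x, y). i < s \<and> x \<in> A i \<and> y \<in> A i \<and> x \<noteq> y \<and> x \<otimes>\<^bsub>G\<^esub> inv\<^bsub>G\<^esub> y = g}"
  have inj: "inj_on snd ?T"
    using pdf_family_index_unique[OF assms] by (auto simp: inj_on_def)
  have image: "snd ` ?T = ?P"
  proof
    show "snd ` ?T \<subseteq> ?P" unfolding block_pairs_def by auto
    show "?P \<subseteq> snd ` ?T"
    proof
      fix p assume "p \<in> ?P"
      then obtain i x y where "p = (x, y)" "i < s" "x \<in> A i" "y \<in> A i" "x \<noteq> y"
          "x \<otimes>\<^bsub>G\<^esub> inv\<^bsub>G\<^esub> y = g"
        unfolding block_pairs_def by blast
      then show "p \<in> snd ` ?T" by (intro image_eqI[of _ _ "(i, x, y)"]) auto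
    qed
  qed
  show ?thesis
    unfolding int_mult_def image[symmetric] by (rule card_image[OF inj, symmetric])
qed

lemma ext_mult_eq_card_fibre:
  assumes "pdf_family G s k A"
  shows "ext_mult G s A g =
    card {(x, y) \<in> pdf_union s A \<times> pdf_union s A - block_pairs s A. x \<otimes>\<^bsub>G\<^esub> inv\<^bsub>G\<^esub> y = g}"
    (is "_ = card ?P")
proof -
  let ?T = "{(i, j, x, y). i < s \<and> j < s \<and> i \<noteq> j \<and> x \<in> A i \<and> y \<in> A j \<and> x \<otimes>\<^bsub>G\<^esub> inv\<^bsub>G\<^esub> y = g}"
  have inj: "inj_on (snd \<circ> snd) ?T"
    using pdf_family_index_unique[OF assms] by (auto simp: inj_on_def)
  have image: "(snd \<circ> snd) ` ?T = ?P"
  proof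
    show "(snd \<circ> snd) ` ?T \<subseteq> ?P"
    proof
      fix p assume "p \<in> (snd \<circ> snd) ` ?T"
      then obtain i j x y where p: "p = (x, y)" and ij: "i < s" "j < s" "i \<noteq> j"
        and xy: "x \<in> A i" "y \<in> A j" "x \<otimes>\<^bsub>G\<^esub> inv\<^bsub>G\<^esub> y = g"
        by auto
      have "(x, y) \<notin> block_pairs s A"
        using pdf_family_index_unique[OF assms] ij xy unfolding block_pairs_def by blast
      then show "p \<in> ?P"
        using p ij xy unfolding pdf_union_def by blast
    qed
    show "?P \<subseteq> (snd \<circ> snd) ` ?T"
    proof
      fix p assume "p \<in> ?P"
      then obtain i j x y where "p = (x, y)" "i < s" "j < s" "x \<in> A i" "y \<in> A j"
          "(x, y) \<notin> A i \<times> A i" "x \<otimes>\<^bsub>G\<^esub> inv\<^bsub>G\<^esub> y = g"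
        unfolding block_pairs_def pdf_union_def by blast
      then show "p \<in> (snd \<circ> snd) ` ?T" by (intro image_eqI[of _ _ "(i, j, x, y)"]) auto
    qed
  qed
  show ?thesis
    unfolding ext_mult_def image[symmetric] by (rule card_image[OF inj, symmetric])
qed

lemma (in group) DPDF_mu_eq_0_or_sk:
  assumes fin: "finite (carrier G)" and gcd: "gcd (s * k) (order G - 1) = 1"
    and D: "DPDF G v s k lam mu A"
    and R_ne: "carrier G - (pdf_union s A \<union> {\<one>}) \<noteq> {}"
  shows "mu = 0 \<or> mu = s * k"
proof -
  have fam: "pdf_family G s k A"
    using D unfolding DPDF_def by blast
  have "mu = 0 \<or> mu = card (pdf_union s A)"
  proof (rule quotient_multiplicity_zero_or_card[OF fin pdf_union_subset[OF fam]])
    show "block_pairs s A - Id \<subseteq> carrier G \<times> pdf_union s A - Id"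
      using block_pairs_subset pdf_union_subset[OF fam] by blast
    show "card (pdf_union s A) dvd card (block_pairs s A - Id)"
      using card_block_pairs_diff_Id[OF fam] card_pdf_union[OF fam] by simp
    show "\<forall>g\<in>pdf_union s A. card {(x, y) \<in> block_pairs s A - Id. x \<otimes> inv y = g} = lam"
      and "\<forall>g\<in>carrier G - (pdf_union s A \<union> {\<one>}).
        card {(x, y) \<in> block_pairs s A - Id. x \<otimes> inv y = g} = mu"
      using D unfolding DPDF_def int_mult_eq_card_fibre[OF fam] by blast+
  qed (use R_ne gcd card_pdf_union[OF fam] in \<open>simp_all add: coprime_iff_gcd_eq_1\<close>)
  then show ?thesis
    using card_pdf_union[OF fam] by simp
qed

lemma (in group) EPDF_mu_eq_0_or_sk:
  assumes fin: "finite (carrier G)" and gcd: "gcd (s * k) (order G - 1) = 1"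
    and E: "EPDF G v s k lam mu A"
    and R_ne: "carrier G - (pdf_union s A \<union> {\<one>}) \<noteq> {}"
  shows "mu = 0 \<or> mu = s * k"
proof -
  have fam: "pdf_family G s k A"
    using E unfolding EPDF_def by blast
  have "mu = 0 \<or> mu = card (pdf_union s A)"
  proof (rule quotient_multiplicity_zero_or_card[OF fin pdf_union_subset[OF fam]])
    show "pdf_union s A \<times> pdf_union s A - block_pairs s A \<subseteq> carrier G \<times> pdf_union s A - Id"
      using pdf_union_subset[OF fam] unfolding block_pairs_def pdf_union_def by blast
    show "card (pdf_union s A) dvd card (pdf_union s A \<times> pdf_union s A - block_pairs s A)"
      using card_pdf_union_sq_diff_block_pairs[OF fam] card_pdf_union[OF fam] by simp
    show "\<forall>g\<in>pdf_union s A.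
        card {(x, y) \<in> pdf_union s A \<times> pdf_union s A - block_pairs s A. x \<otimes> inv y = g} = lam"
      and "\<forall>g\<in>carrier G - (pdf_union s A \<union> {\<one>}).
        card {(x, y) \<in> pdf_union s A \<times> pdf_union s A - block_pairs s A. x \<otimes> inv y = g} = mu"
      using E unfolding EPDF_def ext_mult_eq_card_fibre[OF fam] by blast+
  qed (use R_ne gcd card_pdf_union[OF fam] in \<open>simp_all add: coprime_iff_gcd_eq_1\<close>)
  then show ?thesis
    using card_pdf_union[OF fam] by simp
qed

theorem mainTheorem10:
  fixes G :: "('a, 'b) monoid_scheme" and v s k lam1 mu1 lam2 mu2 :: nat
    and A1 A2 :: "nat \<Rightarrow> 'a set"
  assumes "group G" and "finite (carrier G)" and "order G = v"
    and "gcd (s * k) (v - 1) = 1"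
  shows "(DPDF G v s k lam1 mu1 A1 \<and> carrier G - (pdf_union s A1 \<union> {\<one>\<^bsub>G\<^esub>}) \<noteq> {}
            \<longrightarrow> mu1 = 0 \<or> mu1 = s * k)
       \<and> (EPDF G v s k lam2 mu2 A2 \<and> carrier G - (pdf_union s A2 \<union> {\<one>\<^bsub>G\<^esub>}) \<noteq> {}
            \<longrightarrow> mu2 = 0 \<or> mu2 = s * k)"
proof -
  interpret group G by fact
  have gcd: "gcd (s * k) (order G - 1) = 1"
    using assms(3,4) by simp
  show ?thesis
    using DPDF_mu_eq_0_or_sk[OF assms(2) gcd] EPDF_mu_eq_0_or_sk[OF assms(2) gcd] by blast
qed

end
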